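(* Let $m \geq 1$ be an integer, let $p=(p_1,\dots,p_m)$ be a probability distribution on $\{1,\dots,m\}$, and let $k \geq 1$ be an integer. Throw balls one at a time independently into $m$ bins, each ball landing in bin $i$ with probability $p_i$, and let $T_k$ be the number of balls thrown until some bin first contains $k$ balls. Then, with $\|p\|_k = \left(\sum_{i=1}^m p_i^k\right)^{1/k}$, \[ \left(\frac{1}{e}\right)\left(\frac{k}{k+1}\right)\frac{k}{\|p\|_k} \;\leq\; \mathbb{E}\,T_k \;\leq\; \frac{k}{\|p\|_k}. \] *)

theory Defs
  imports "HOL-Probability.Probability"
begin

text \<open>Balls are thrown independently; ball number j (0-based) lands in bin \<open>\<omega> !! j\<close>.
  \<open>balls_until k \<omega>\<close> is the number of balls thrown until some bin first contains k balls,
  i.e. the least n such that among the first n balls some bin received at least k.\<close>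
definition balls_until :: "nat \<Rightarrow> nat stream \<Rightarrow> nat" where
  "balls_until k \<omega> = (LEAST n. \<exists>i. k \<le> card {j. j < n \<and> \<omega> !! j = i})"

end

theory Submission
  imports Defs "HOL-Computational_Algebra.Polynomial"
begin

(* Let G_k(x) = e^(-x) * sum_(j<k) x^j/j! be the probability that a Poisson variable of mean x is
   less than k.  If the balls are thrown at the jumps of a rate-one Poisson process, the bins fill
   independently, which gives E T_k = integral_0^oo prod_i G_k(p_i t) dt.  This identity is obtained
   here without Poisson processes: as a function of the current bin loads c, both the expected
   remaining time and the integral against e^(-t) of the polynomial
   prod_i sum_(j < k - c_i) (p_i t)^j/j! satisfy the same first-step recursion.

   Upper bound: x -> -ln G_k(x) / x^k is nonincreasing, so a -> G_k(a^(1/k)) is supermultiplicative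
   and prod_i G_k(p_i t) <= G_k(||p||_k t); moreover integral_0^oo G_k(s t) dt = k/s.

   Lower bound: 1 - G_k(x) <= x^k/k! and the Weierstrass product inequality give
   prod_i G_k(p_i t) >= 1 - (||p||_k t)^k/k!; integrating this up to its zero
   b = (k!)^(1/k) / ||p||_k gives b k/(k+1), and (k!)^(1/k) >= k/e. *)

section \<open>Truncated exponential series\<close>

definition exp_trunc :: "nat \<Rightarrow> real \<Rightarrow> real" where
  "exp_trunc r x = (\<Sum>j<r. x ^ j / fact j)"

definition exp_trunc_poly :: "nat \<Rightarrow> real \<Rightarrow> real poly" where
  "exp_trunc_poly r q = (\<Sum>j<r. monom (q ^ j / fact j) j)"

lemma exp_trunc_Suc: "exp_trunc (Suc r) x = exp_trunc r x + x ^ r / fact r"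
  by (simp add: exp_trunc_def)

lemma exp_trunc_Suc_0 [simp]: "exp_trunc (Suc r) 0 = 1"
  by (simp add: exp_trunc_def sum.lessThan_Suc_shift del: sum.lessThan_Suc)

lemma exp_trunc_nonneg: "x \<ge> 0 \<Longrightarrow> exp_trunc r x \<ge> 0"
  by (auto simp: exp_trunc_def intro!: sum_nonneg)

lemma exp_trunc_Suc_ge_1: "x \<ge> 0 \<Longrightarrow> exp_trunc (Suc r) x \<ge> 1"
  by (simp add: exp_trunc_def sum.lessThan_Suc_shift del: sum.lessThan_Suc)
     (auto intro!: sum_nonneg)

lemma poly_exp_trunc_poly: "poly (exp_trunc_poly r q) t = exp_trunc r (q * t)"
  by (simp add: exp_trunc_poly_def exp_trunc_def poly_sum poly_monom power_mult_distrib)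

lemma pderiv_exp_trunc_poly: "pderiv (exp_trunc_poly (Suc r) q) = smult q (exp_trunc_poly r q)"
proof (induction r)
  case 0
  then show ?case by (simp add: exp_trunc_poly_def pderiv_monom)
next
  case (Suc r)
  have "of_nat (Suc r) * (q ^ Suc r / fact (Suc r)) = q * (q ^ r / fact r :: real)"
    unfolding fact_Suc by (simp del: of_nat_Suc)
  with Suc show ?case
    by (simp add: exp_trunc_poly_def pderiv_add pderiv_monom smult_add_right smult_monom)
qed

lemma DERIV_exp_trunc: "(exp_trunc (Suc r) has_real_derivative exp_trunc r x) (at x)"
  using poly_DERIV[of "exp_trunc_poly (Suc r) 1" x]
  by (simp add: pderiv_exp_trunc_poly poly_exp_trunc_poly)

definition nonneg_coeffs :: "real poly \<Rightarrow> bool" where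
  "nonneg_coeffs f \<longleftrightarrow> (\<forall>n. coeff f n \<ge> 0)"

lemma nonneg_coeffs_mult: "nonneg_coeffs f \<Longrightarrow> nonneg_coeffs g \<Longrightarrow> nonneg_coeffs (f * g)"
  unfolding nonneg_coeffs_def by (auto simp: coeff_mult intro!: sum_nonneg)

lemma nonneg_coeffs_prod: "(\<And>i. i \<in> A \<Longrightarrow> nonneg_coeffs (f i)) \<Longrightarrow> nonneg_coeffs (\<Prod>i\<in>A. f i)"
proof (induction A rule: infinite_finite_induct)
  case (insert x F)
  then show ?case by (simp add: nonneg_coeffs_mult)
qed (simp_all add: nonneg_coeffs_def coeff_1)

lemma nonneg_coeffs_exp_trunc_poly: "q \<ge> 0 \<Longrightarrow> nonneg_coeffs (exp_trunc_poly r q)"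
  by (auto simp: nonneg_coeffs_def exp_trunc_poly_def coeff_sum coeff_monom intro!: sum_nonneg)

text \<open>\<open>exp_moment f\<close> is the expectation of \<open>f X\<close> for \<open>X\<close> exponentially distributed with
  mean 1, since \<open>E X^n = n!\<close>.\<close>
definition exp_moment :: "real poly \<Rightarrow> real" where
  "exp_moment f = (\<Sum>n\<le>degree f. coeff f n * fact n)"

lemma exp_moment_altdef: "degree f \<le> N \<Longrightarrow> exp_moment f = (\<Sum>n\<le>N. coeff f n * fact n)"
  unfolding exp_moment_def by (intro sum.mono_neutral_left) (auto simp: coeff_eq_0)

lemma exp_moment_0 [simp]: "exp_moment 0 = 0"
  by (simp add: exp_moment_def)

lemma exp_moment_add: "exp_moment (f + g) = exp_moment f + exp_moment g"
proof -
  let ?N = "max (degree f) (degree g)"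
  have "degree (f + g) \<le> ?N" by (rule degree_add_le) auto
  then show ?thesis
    by (simp add: exp_moment_altdef[of _ ?N] sum.distrib algebra_simps)
qed

lemma exp_moment_smult: "exp_moment (smult a f) = a * exp_moment f"
  by (simp add: exp_moment_altdef[of "smult a f" "degree f"] exp_moment_def sum_distrib_left
      algebra_simps)

lemma exp_moment_sum: "exp_moment (\<Sum>i\<in>A. f i) = (\<Sum>i\<in>A. exp_moment (f i))"
  by (induction A rule: infinite_finite_induct) (simp_all add: exp_moment_add)

lemma exp_moment_nonneg: "nonneg_coeffs f \<Longrightarrow> exp_moment f \<ge> 0"
  unfolding exp_moment_def nonneg_coeffs_def by (auto intro!: sum_nonneg)

text \<open>Integration by parts against \<open>e\<^sup>-\<^sup>t\<close>.\<close>
lemma exp_moment_pderiv: "exp_moment f = poly f 0 + exp_moment (pderiv f)"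
proof -
  let ?N = "degree f"
  have "exp_moment (pderiv f) = (\<Sum>n\<le>?N. of_nat (Suc n) * coeff f (Suc n) * fact n)"
    by (simp add: exp_moment_altdef[of _ ?N] degree_pderiv coeff_pderiv)
  also have "\<dots> = (\<Sum>n<Suc ?N. coeff f (Suc n) * fact (Suc n))"
    by (intro sum.cong) (auto simp: lessThan_Suc_atMost)
  also have "coeff f 0 + \<dots> = (\<Sum>n\<le>Suc ?N. coeff f n * fact n)"
    by (subst sum.atMost_Suc_shift) (simp add: atLeast0AtMost lessThan_Suc_atMost)
  also have "\<dots> = exp_moment f"
    by (rule exp_moment_altdef[symmetric]) simp
  finally show ?thesis by (simp add: poly_0_coeff_0)
qed

lemma nn_integral_exp_moment:
  assumes "nonneg_coeffs f"
  shows "(\<integral>\<^sup>+t. ennreal (exp (-t) * poly f t) * indicator {0..} t \<partial>lborel) = ennreal (exp_moment f)"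
proof -
  have c: "coeff f n \<ge> 0" for n
    using assms by (simp add: nonneg_coeffs_def)
  have eq: "ennreal (exp (-t) * poly f t) * indicator {0..} t =
      (\<Sum>n\<le>degree f. ennreal (coeff f n) * (ennreal (t^n * exp (-t)) * indicator {0..} t))" for t
  proof (cases "t \<ge> 0")
    case True
    have "exp (-t) * poly f t = (\<Sum>n\<le>degree f. coeff f n * (t^n * exp (-t)))"
      by (simp add: poly_altdef sum_distrib_left mult_ac)
    then show ?thesis
      using True c by (simp add: ennreal_mult sum_ennreal[symmetric] sum_nonneg)
  qed simp
  have "(\<integral>\<^sup>+t. ennreal (exp (-t) * poly f t) * indicator {0..} t \<partial>lborel) =
      (\<Sum>n\<le>degree f. ennreal (coeff f n) *
         (\<integral>\<^sup>+t. ennreal (t^n * exp (-t)) * indicator {0..} t \<partial>lborel))"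
    unfolding eq by (subst nn_integral_sum) (auto simp: nn_integral_cmult)
  also have "\<dots> = (\<Sum>n\<le>degree f. ennreal (coeff f n * fact n))"
    using c by (simp add: nn_intergal_power_times_exp_Ici ennreal_mult)
  also have "\<dots> = ennreal (exp_moment f)"
    using c by (simp add: exp_moment_def sum_ennreal)
  finally show ?thesis .
qed

section \<open>First-step analysis of the ball process\<close>

text \<open>\<open>c i\<close> is the number of balls already in bin \<open>i\<close> before \<open>\<omega>\<close> is thrown.\<close>
definition some_bin_full :: "nat \<Rightarrow> ('a::countable \<Rightarrow> nat) \<Rightarrow> 'a stream \<Rightarrow> nat \<Rightarrow> bool" where
  "some_bin_full k c \<omega> n \<longleftrightarrow> (\<exists>i. k \<le> c i + count (mset (stake n \<omega>)) i)"

definition fill_time :: "nat \<Rightarrow> ('a::countable \<Rightarrow> nat) \<Rightarrow> 'a stream \<Rightarrow> ennreal" where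
  "fill_time k c \<omega> =
     (if \<exists>n. some_bin_full k c \<omega> n then of_nat (LEAST n. some_bin_full k c \<omega> n) else \<infinity>)"

lemma some_bin_full_Cons_Suc:
  "some_bin_full k c (x ## \<omega>) (Suc n) = some_bin_full k (c(x := Suc (c x))) \<omega> n"
  unfolding some_bin_full_def by (rule iffI) (auto split: if_splits)

lemma not_some_bin_full_0: "(\<And>i. c i < k) \<Longrightarrow> \<not> some_bin_full k c \<omega> 0"
  unfolding some_bin_full_def by (auto simp: not_le)

lemma fill_time_Cons:
  assumes "\<And>i. c i < k"
  shows "fill_time k c (x ## \<omega>) =
           1 + (if k \<le> Suc (c x) then 0 else fill_time k (c(x := Suc (c x))) \<omega>)"
proof -
  let ?c = "c(x := Suc (c x))"
  have not0: "\<not> some_bin_full k c (x ## \<omega>) 0"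
    by (rule not_some_bin_full_0[OF assms])
  show ?thesis
  proof (cases "k \<le> Suc (c x)")
    case True
    then have full1: "some_bin_full k c (x ## \<omega>) 1"
      unfolding One_nat_def some_bin_full_Cons_Suc by (auto simp: some_bin_full_def)
    then have "(LEAST n. some_bin_full k c (x ## \<omega>) n) = 1"
      by (rule Least_equality) (metis not0 less_one not_less)
    with True full1 show ?thesis
      by (auto simp: fill_time_def)
  next
    case False
    show ?thesis
    proof (cases "\<exists>n. some_bin_full k ?c \<omega> n")
      case True
      then obtain n where n: "some_bin_full k c (x ## \<omega>) (Suc n)"
        by (auto simp: some_bin_full_Cons_Suc)
      then have "(LEAST n. some_bin_full k c (x ## \<omega>) n) =
                   Suc (LEAST n. some_bin_full k c (x ## \<omega>) (Suc n))"
        using not0 by (rule Least_Suc)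
      moreover have ex: "\<exists>n. some_bin_full k c (x ## \<omega>) n"
        using n by blast
      ultimately show ?thesis
        using False True
        unfolding fill_time_def by (auto simp: some_bin_full_Cons_Suc add.commute)
    next
      case never: False
      then have "\<not> (\<exists>n. some_bin_full k c (x ## \<omega>) n)"
        using not0 by (metis not0_implies_Suc some_bin_full_Cons_Suc)
      with False never show ?thesis
        by (simp add: fill_time_def)
    qed
  qed
qed

lemma measurable_some_bin_full [measurable]:
  "(\<lambda>\<omega>. some_bin_full k c \<omega> n) \<in> measurable (stream_space (measure_pmf P)) (count_space UNIV)"
proof -
  have "sets (stream_space (measure_pmf P)) = sets (stream_space (count_space UNIV))"
    by (rule sets_stream_space_cong) simp
  moreover have "(\<lambda>\<omega>. (\<lambda>xs. \<exists>i. k \<le> c i + count (mset xs) i) (stake n \<omega>))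
      \<in> measurable (stream_space (count_space UNIV)) (count_space UNIV)"
    by (rule measurable_compose[OF measurable_stake]) simp
  ultimately show ?thesis
    unfolding some_bin_full_def by (simp add: measurable_cong_sets)
qed

lemma borel_measurable_fill_time [measurable]:
  "fill_time k c \<in> borel_measurable (stream_space (measure_pmf P))"
  unfolding fill_time_def by measurable

lemma nn_integral_fill_time_rec:
  assumes "\<And>i. c i < k" and "finite A" and "set_pmf P \<subseteq> A"
  shows "(\<integral>\<^sup>+\<omega>. fill_time k c \<omega> \<partial>stream_space (measure_pmf P)) =
    (\<Sum>x\<in>A. (1 + (if k \<le> Suc (c x) then 0
                   else \<integral>\<^sup>+\<omega>. fill_time k (c(x := Suc (c x))) \<omega> \<partial>stream_space (measure_pmf P)))
             * pmf P x)"
proof -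
  let ?S = "stream_space (measure_pmf P)"
  interpret S: prob_space ?S
    by (rule prob_space.prob_space_stream_space[OF measure_pmf.prob_space_axioms])
  have "(\<integral>\<^sup>+\<omega>. fill_time k c \<omega> \<partial>?S) = (\<integral>\<^sup>+x. (\<integral>\<^sup>+\<omega>. fill_time k c (x ## \<omega>) \<partial>?S) \<partial>measure_pmf P)"
    by (rule prob_space.nn_integral_stream_space[OF measure_pmf.prob_space_axioms]) measurable
  also have "\<dots> = (\<integral>\<^sup>+x. 1 + (if k \<le> Suc (c x) then 0
                             else \<integral>\<^sup>+\<omega>. fill_time k (c(x := Suc (c x))) \<omega> \<partial>?S) \<partial>measure_pmf P)"
    by (intro nn_integral_cong) (simp add: fill_time_Cons[OF assms(1)] nn_integral_add S.emeasure_space_1)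
  also have "\<dots> = (\<Sum>x\<in>A. (1 + (if k \<le> Suc (c x) then 0
                             else \<integral>\<^sup>+\<omega>. fill_time k (c(x := Suc (c x))) \<omega> \<partial>?S)) * pmf P x)"
    by (rule nn_integral_measure_pmf_support) (use assms(2,3) in auto)
  finally show ?thesis .
qed

text \<open>If \<open>p\<close> sums to 1, \<open>e\<^sup>-\<^sup>t\<close> times this polynomial at \<open>t\<close> is the probability that no bin is
  full at time \<open>t\<close> when the balls are thrown at the jumps of a rate-one Poisson process.\<close>
definition survival_poly :: "('a \<Rightarrow> real) \<Rightarrow> 'a set \<Rightarrow> nat \<Rightarrow> ('a \<Rightarrow> nat) \<Rightarrow> real poly" where
  "survival_poly p A k c = (\<Prod>i\<in>A. exp_trunc_poly (k - c i) (p i))"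

lemma survival_poly_eq_0: "finite A \<Longrightarrow> x \<in> A \<Longrightarrow> k \<le> c x \<Longrightarrow> survival_poly p A k c = 0"
  unfolding survival_poly_def by (rule prod_zero) (auto simp: exp_trunc_poly_def intro!: bexI[of _ x])

lemma nonneg_coeffs_survival_poly: "(\<And>i. p i \<ge> 0) \<Longrightarrow> nonneg_coeffs (survival_poly p A k c)"
  unfolding survival_poly_def by (intro nonneg_coeffs_prod nonneg_coeffs_exp_trunc_poly)

lemma exp_moment_survival_poly_rec:
  assumes "\<And>i. c i < k" and "finite A"
  shows "exp_moment (survival_poly p A k c) =
           1 + (\<Sum>x\<in>A. p x * exp_moment (survival_poly p A k (c(x := Suc (c x)))))"
proof -
  have k_minus: "k - c i = Suc (k - Suc (c i))" for i
    using assms(1)[of i] by linarith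
  have "poly (survival_poly p A k c) 0 = 1"
    by (simp add: survival_poly_def poly_prod k_minus poly_exp_trunc_poly)
  moreover have "pderiv (survival_poly p A k c) =
                   (\<Sum>x\<in>A. smult (p x) (survival_poly p A k (c(x := Suc (c x)))))"
  proof -
    have "pderiv (survival_poly p A k c) =
        (\<Sum>x\<in>A. (\<Prod>i\<in>A - {x}. exp_trunc_poly (k - c i) (p i)) * pderiv (exp_trunc_poly (k - c x) (p x)))"
      unfolding survival_poly_def by (rule pderiv_prod)
    also have "\<dots> = (\<Sum>x\<in>A. smult (p x) (survival_poly p A k (c(x := Suc (c x)))))"
    proof (intro sum.cong refl)
      fix x assume x: "x \<in> A"
      have "(\<Prod>i\<in>A - {x}. exp_trunc_poly (k - (c(x := Suc (c x))) i) (p i)) =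
              (\<Prod>i\<in>A - {x}. exp_trunc_poly (k - c i) (p i))"
        by (intro prod.cong) auto
      with x assms(2) show "(\<Prod>i\<in>A - {x}. exp_trunc_poly (k - c i) (p i)) *
          pderiv (exp_trunc_poly (k - c x) (p x)) = smult (p x) (survival_poly p A k (c(x := Suc (c x))))"
        by (simp add: survival_poly_def prod.remove k_minus[of x] pderiv_exp_trunc_poly mult.commute)
    qed
    finally show ?thesis .
  qed
  ultimately show ?thesis
    by (subst exp_moment_pderiv) (simp add: exp_moment_sum exp_moment_smult)
qed

text \<open>Both sides satisfy the first-step recursion of \<open>exp_moment_survival_poly_rec\<close> and
  \<open>nn_integral_fill_time_rec\<close>; induct on the total number of balls still missing.\<close>
lemma nn_integral_fill_time:
  assumes "finite A" and "set_pmf P \<subseteq> A" and "\<forall>i. c i < k"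
  shows "(\<integral>\<^sup>+\<omega>. fill_time k c \<omega> \<partial>stream_space (measure_pmf P)) =
           ennreal (exp_moment (survival_poly (pmf P) A k c))"
  using assms(3)
proof (induction "\<Sum>i\<in>A. k - c i" arbitrary: c rule: less_induct)
  case less
  let ?S = "stream_space (measure_pmf P)"
  let ?c = "\<lambda>x. c(x := Suc (c x))"
  let ?L = "\<lambda>x. exp_moment (survival_poly (pmf P) A k (?c x))"
  have L_nonneg: "?L x \<ge> 0" for x
    by (intro exp_moment_nonneg nonneg_coeffs_survival_poly) simp
  have step: "1 + (if k \<le> Suc (c x) then 0 else \<integral>\<^sup>+\<omega>. fill_time k (?c x) \<omega> \<partial>?S) = ennreal (1 + ?L x)"
    if x: "x \<in> A" for x
  proof (cases "k \<le> Suc (c x)")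
    case True
    then have "?L x = 0"
      using survival_poly_eq_0[OF assms(1) x, of k "?c x"] by simp
    with True show ?thesis by simp
  next
    case False
    have "(\<Sum>i\<in>A. k - ?c x i) < (\<Sum>i\<in>A. k - c i)"
      by (rule sum_strict_mono_ex1) (use assms(1) x False in auto)
    moreover have "\<forall>i. ?c x i < k"
      using less.prems False by auto
    ultimately have "(\<integral>\<^sup>+\<omega>. fill_time k (?c x) \<omega> \<partial>?S) = ennreal (?L x)"
      by (rule less.hyps)
    with False L_nonneg[of x] show ?thesis by (simp add: ennreal_plus)
  qed
  have "(\<integral>\<^sup>+\<omega>. fill_time k c \<omega> \<partial>?S) = (\<Sum>x\<in>A. ennreal (1 + ?L x) * pmf P x)"
    using nn_integral_fill_time_rec[of c k A P] less.prems assms(1,2) step by simp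
  also have "\<dots> = (\<Sum>x\<in>A. ennreal (pmf P x + pmf P x * ?L x))"
    using L_nonneg by (intro sum.cong refl) (simp add: ennreal_mult'[symmetric] algebra_simps)
  also have "\<dots> = ennreal (\<Sum>x\<in>A. pmf P x + pmf P x * ?L x)"
    using L_nonneg by (intro sum_ennreal) simp
  also have "(\<Sum>x\<in>A. pmf P x + pmf P x * ?L x) = 1 + (\<Sum>x\<in>A. pmf P x * ?L x)"
    using assms(1,2) by (simp add: sum.distrib sum_pmf_eq_1)
  also have "\<dots> = exp_moment (survival_poly (pmf P) A k c)"
    using exp_moment_survival_poly_rec[of c k A "pmf P"] less.prems assms(1) by simp
  finally show ?case .
qed

lemma integral_balls_until:
  assumes "finite A" and "set_pmf P \<subseteq> A" and "k \<ge> 1"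
  shows "(\<integral>\<omega>. real (balls_until k \<omega>) \<partial>stream_space (measure_pmf P)) =
           exp_moment (survival_poly (pmf P) A k (\<lambda>_. 0))"
proof -
  let ?S = "stream_space (measure_pmf P)"
  let ?E = "exp_moment (survival_poly (pmf P) A k (\<lambda>_. 0))"
  have E: "(\<integral>\<^sup>+\<omega>. fill_time k (\<lambda>_. 0) \<omega> \<partial>?S) = ennreal ?E"
    using nn_integral_fill_time[OF assms(1,2)] assms(3) by simp
  have balls_until_eq: "balls_until k \<omega> = (LEAST n. some_bin_full k (\<lambda>_. 0) \<omega> n)" for \<omega>
  proof -
    have "{j. j < n \<and> \<omega> !! j = i} = {j. j < n \<and> i = stake n \<omega> ! j}" for n i
      by auto
    then have "card {j. j < n \<and> \<omega> !! j = i} = count (mset (stake n \<omega>)) i" for n i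
      by (simp add: count_mset count_list_eq_length_filter length_filter_conv_card)
    then show ?thesis
      by (simp add: balls_until_def some_bin_full_def)
  qed
  have "AE \<omega> in ?S. fill_time k (\<lambda>_. 0) \<omega> \<noteq> \<infinity>"
    by (rule nn_integral_PInf_AE) (auto simp: E)
  then have "AE \<omega> in ?S. ennreal (real (balls_until k \<omega>)) = fill_time k (\<lambda>_. 0) \<omega>"
    by eventually_elim
       (auto simp: fill_time_def balls_until_eq ennreal_of_nat_eq_real_of_nat split: if_splits)
  then have "(\<integral>\<^sup>+\<omega>. ennreal (real (balls_until k \<omega>)) \<partial>?S) = ennreal ?E"
    by (simp add: nn_integral_cong_AE E)
  moreover have "(\<lambda>\<omega>. real (balls_until k \<omega>)) \<in> borel_measurable ?S"
    unfolding balls_until_eq by measurable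
  ultimately show ?thesis
    using exp_moment_nonneg[OF nonneg_coeffs_survival_poly, of "pmf P" A k "\<lambda>_. 0"]
    by (simp add: integral_eq_nn_integral)
qed

section \<open>Poisson tail probabilities\<close>

definition poisson_lt :: "nat \<Rightarrow> real \<Rightarrow> real" where
  "poisson_lt k x = exp (-x) * exp_trunc k x"

lemma poisson_lt_nonneg: "x \<ge> 0 \<Longrightarrow> poisson_lt k x \<ge> 0"
  by (simp add: poisson_lt_def exp_trunc_nonneg)

lemma poisson_lt_Suc_0 [simp]: "poisson_lt (Suc r) 0 = 1"
  by (simp add: poisson_lt_def)

lemma DERIV_poisson_lt:
  "(poisson_lt (Suc r) has_real_derivative - exp (-x) * x ^ r / fact r) (at x)"
proof -
  have "((\<lambda>x. exp (-x) * exp_trunc (Suc r) x) has_real_derivative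
          - exp (-x) * exp_trunc (Suc r) x + exp (-x) * exp_trunc r x) (at x)"
    by (auto intro!: derivative_eq_intros DERIV_exp_trunc)
  then show ?thesis
    unfolding poisson_lt_def[abs_def] by (simp add: exp_trunc_Suc algebra_simps)
qed

lemma poisson_lt_le_1:
  assumes "x \<ge> 0"
  shows "poisson_lt k x \<le> 1"
proof (cases k)
  case 0
  then show ?thesis by (simp add: poisson_lt_def exp_trunc_def)
next
  case (Suc r)
  have "poisson_lt (Suc r) x \<le> poisson_lt (Suc r) 0"
    by (rule DERIV_nonpos_imp_nonincreasing[OF assms])
       (auto intro!: exI DERIV_poisson_lt divide_nonneg_nonneg)
  with Suc show ?thesis by simp
qed

lemma one_minus_power_le_poisson_lt:
  assumes "x \<ge> 0"
  shows "1 - x ^ k / fact k \<le> poisson_lt k x"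
proof (cases k)
  case 0
  then show ?thesis by (simp add: poisson_lt_def exp_trunc_def)
next
  case (Suc r)
  define \<phi> where "\<phi> y = y ^ Suc r / fact (Suc r) - 1 + poisson_lt (Suc r) y" for y
  have deriv: "(\<phi> has_real_derivative y ^ r / fact r - exp (-y) * y ^ r / fact r) (at y)" for y
  proof -
    have "((\<lambda>y. y ^ Suc r) has_real_derivative of_nat (Suc r) * y ^ r) (at y)"
      using DERIV_pow[of "Suc r" y] by simp
    then have "(\<phi> has_real_derivative of_nat (Suc r) * y ^ r / fact (Suc r) - 0
              + (- exp (-y) * y ^ r / fact r)) (at y)"
      unfolding \<phi>_def[abs_def]
      by (intro DERIV_add DERIV_diff DERIV_cdivide DERIV_poisson_lt DERIV_const)
    moreover have "of_nat (Suc r) * y ^ r / fact (Suc r) = y ^ r / (fact r :: real)"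
      unfolding fact_Suc by (simp del: of_nat_Suc)
    ultimately show ?thesis by simp
  qed
  have "\<phi> 0 \<le> \<phi> x"
  proof (rule DERIV_nonneg_imp_nondecreasing[OF assms])
    fix y :: real
    assume "0 \<le> y"
    then have "exp (-y) * y ^ r / fact r \<le> y ^ r / fact r"
      by (intro divide_right_mono mult_left_le_one_le) auto
    with deriv[of y] show "\<exists>d. (\<phi> has_real_derivative d) (at y) \<and> 0 \<le> d"
      by (intro exI[of _ "y ^ r / fact r - exp (-y) * y ^ r / fact r"]) simp
  qed
  with Suc show ?thesis by (simp add: \<phi>_def)
qed

lemma exp_moment_survival_poly_eq_nn_integral:
  assumes "finite A" and "\<And>i. p i \<ge> 0" and "(\<Sum>i\<in>A. p i) = 1"
  shows "ennreal (exp_moment (survival_poly p A k (\<lambda>_. 0))) =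
           (\<integral>\<^sup>+t. ennreal (\<Prod>i\<in>A. poisson_lt k (p i * t)) * indicator {0..} t \<partial>lborel)"
proof -
  have exp_split: "exp (-t) = (\<Prod>i\<in>A. exp (- (p i * t)))" for t
    using assms(1,3) by (simp add: exp_sum[symmetric] sum_negf sum_distrib_right[symmetric])
  have integrand: "exp (-t) * poly (survival_poly p A k (\<lambda>_. 0)) t = (\<Prod>i\<in>A. poisson_lt k (p i * t))" for t
    by (simp add: exp_split[of t] survival_poly_def poly_prod poly_exp_trunc_poly poisson_lt_def
        prod.distrib)
  have "ennreal (exp_moment (survival_poly p A k (\<lambda>_. 0))) =
      (\<integral>\<^sup>+t. ennreal (exp (-t) * poly (survival_poly p A k (\<lambda>_. 0)) t) * indicator {0..} t \<partial>lborel)"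
    using nn_integral_exp_moment[symmetric] assms(2) nonneg_coeffs_survival_poly by blast
  also have "\<dots> = (\<integral>\<^sup>+t. ennreal (\<Prod>i\<in>A. poisson_lt k (p i * t)) * indicator {0..} t \<partial>lborel)"
    by (simp only: integrand)
  finally show ?thesis .
qed

section \<open>The upper bound\<close>

definition neg_ln_poisson_lt :: "nat \<Rightarrow> real \<Rightarrow> real" where
  "neg_ln_poisson_lt r x = x - ln (exp_trunc (Suc r) x)"

lemma poisson_lt_Suc_eq_exp:
  "x \<ge> 0 \<Longrightarrow> poisson_lt (Suc r) x = exp (- neg_ln_poisson_lt r x)"
  using exp_trunc_Suc_ge_1[of x r]
  by (simp add: poisson_lt_def neg_ln_poisson_lt_def exp_diff exp_minus field_simps)

lemma DERIV_neg_ln_poisson_lt: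
  assumes "x \<ge> 0"
  shows "(neg_ln_poisson_lt r has_real_derivative (x ^ r / fact r) / exp_trunc (Suc r) x) (at x)"
proof -
  have pos: "exp_trunc (Suc r) x > 0"
    using exp_trunc_Suc_ge_1[OF assms, of r] by simp
  have "(neg_ln_poisson_lt r has_real_derivative 1 - (1 / exp_trunc (Suc r) x) * exp_trunc r x) (at x)"
    unfolding neg_ln_poisson_lt_def[abs_def]
    by (intro DERIV_diff DERIV_ident DERIV_chain2[where f = ln] DERIV_ln_divide pos DERIV_exp_trunc)
  moreover have "1 - (1 / exp_trunc (Suc r) x) * exp_trunc r x = (x ^ r / fact r) / exp_trunc (Suc r) x"
    using pos by (simp add: exp_trunc_Suc field_simps)
  ultimately show ?thesis by simp
qed

text \<open>In terms of \<open>u = neg_ln_poisson_lt r\<close>: \<open>x u'(x) \<le> (r + 1) u(x)\<close>.\<close>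
lemma neg_ln_poisson_lt_elasticity:
  assumes "x \<ge> 0"
  shows "x ^ Suc r / (fact r * exp_trunc (Suc r) x) \<le> real (Suc r) * neg_ln_poisson_lt r x"
proof -
  define g where "g y = real (Suc r) * neg_ln_poisson_lt r y - y ^ Suc r / (fact r * exp_trunc (Suc r) y)"
    for y
  have "g 0 \<le> g x"
  proof (rule DERIV_nonneg_imp_nondecreasing[OF assms])
    fix y :: real
    assume y: "0 \<le> y"
    let ?E = "exp_trunc (Suc r) y"
    have pos: "?E > 0"
      using exp_trunc_Suc_ge_1[OF y, of r] by simp
    have pow: "((\<lambda>x. x ^ Suc r) has_real_derivative of_nat (Suc r) * y ^ r) (at y)"
      using DERIV_pow[of "Suc r" y] by simp
    have "(g has_real_derivative real (Suc r) * ((y ^ r / fact r) / ?E) -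
        ((of_nat (Suc r) * y ^ r) * (fact r * ?E) - y ^ Suc r * (fact r * exp_trunc r y)) /
        ((fact r * ?E) * (fact r * ?E))) (at y)"
      unfolding g_def[abs_def] using pos
      by (intro DERIV_diff DERIV_cmult DERIV_neg_ln_poisson_lt y DERIV_divide pow DERIV_exp_trunc) simp_all
    moreover have "real (Suc r) * ((y ^ r / fact r) / ?E) -
        ((of_nat (Suc r) * y ^ r) * (fact r * ?E) - y ^ Suc r * (fact r * exp_trunc r y)) /
        ((fact r * ?E) * (fact r * ?E)) = y ^ Suc r * exp_trunc r y / (fact r * ?E ^ 2)"
      using pos by (simp add: field_simps power2_eq_square)
    moreover have "y ^ Suc r * exp_trunc r y / (fact r * ?E ^ 2) \<ge> 0"
      using y pos by (simp add: exp_trunc_nonneg)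
    ultimately show "\<exists>d. (g has_real_derivative d) (at y) \<and> 0 \<le> d"
      by auto
  qed
  then show ?thesis
    by (simp add: g_def neg_ln_poisson_lt_def)
qed

lemma neg_ln_poisson_lt_div_power_antimono:
  assumes "0 < a" and "a \<le> b"
  shows "neg_ln_poisson_lt r b / b ^ Suc r \<le> neg_ln_poisson_lt r a / a ^ Suc r"
proof (rule DERIV_nonpos_imp_nonincreasing[OF assms(2)])
  fix y :: real
  assume "a \<le> y" "y \<le> b"
  then have y: "y > 0" using assms by simp
  let ?E = "exp_trunc (Suc r) y"
  let ?u = "neg_ln_poisson_lt r"
  have pos: "?E > 0"
    using exp_trunc_Suc_ge_1[of y r] y by simp
  have pow: "((\<lambda>x. x ^ Suc r) has_real_derivative of_nat (Suc r) * y ^ r) (at y)"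
    using DERIV_pow[of "Suc r" y] by simp
  let ?N = "((y ^ r / fact r) / ?E) * y ^ Suc r - ?u y * (of_nat (Suc r) * y ^ r)"
  have deriv: "((\<lambda>x. ?u x / x ^ Suc r) has_real_derivative ?N / (y ^ Suc r * y ^ Suc r)) (at y)"
    using y by (intro DERIV_divide DERIV_neg_ln_poisson_lt pow) simp_all
  have "?N = y ^ r * (y ^ Suc r / (fact r * ?E) - real (Suc r) * ?u y)"
    using pos by (simp add: field_simps)
  also have "\<dots> \<le> 0"
    using neg_ln_poisson_lt_elasticity[of y r] y by (simp add: mult_nonneg_nonpos)
  finally have "?N / (y ^ Suc r * y ^ Suc r) \<le> 0"
    by (rule divide_nonpos_nonneg) simp
  with deriv show "\<exists>d. ((\<lambda>x. ?u x / x ^ Suc r) has_real_derivative d) (at y) \<and> d \<le> 0"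
    by blast
qed

lemma neg_ln_poisson_lt_subadditive:
  assumes "x > 0" "y > 0" "z > 0" and "z ^ Suc r = x ^ Suc r + y ^ Suc r"
  shows "neg_ln_poisson_lt r z \<le> neg_ln_poisson_lt r x + neg_ln_poisson_lt r y"
proof -
  let ?v = "\<lambda>x. neg_ln_poisson_lt r x / x ^ Suc r"
  have "x ^ Suc r \<le> z ^ Suc r" "y ^ Suc r \<le> z ^ Suc r"
    using assms by simp_all
  then have "x \<le> z" "y \<le> z"
    using assms(3) less_imp_le power_le_imp_le_base by blast+
  then have "?v z \<le> ?v x" "?v z \<le> ?v y"
    using assms(1,2) neg_ln_poisson_lt_div_power_antimono by blast+
  have "neg_ln_poisson_lt r z = ?v z * z ^ Suc r"
    using assms(3) by simp
  also have "\<dots> = ?v z * x ^ Suc r + ?v z * y ^ Suc r"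
    by (simp only: assms(4) distrib_left)
  also have "\<dots> \<le> ?v x * x ^ Suc r + ?v y * y ^ Suc r"
    using \<open>?v z \<le> ?v x\<close> \<open>?v z \<le> ?v y\<close> assms(1,2) by (intro add_mono mult_right_mono) simp_all
  also have "\<dots> = neg_ln_poisson_lt r x + neg_ln_poisson_lt r y"
    using assms(1,2) by simp
  finally show ?thesis .
qed

lemma poisson_lt_mult_le:
  assumes "x \<ge> 0" "y \<ge> 0" "z \<ge> 0" and "z ^ Suc r = x ^ Suc r + y ^ Suc r"
  shows "poisson_lt (Suc r) x * poisson_lt (Suc r) y \<le> poisson_lt (Suc r) z"
proof (cases "x = 0 \<or> y = 0")
  case True
  have "z = y" if "x = 0"
    using that assms by (intro power_eq_imp_eq_base[of z "Suc r" y]) simp_all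
  moreover have "z = x" if "y = 0"
    using that assms by (intro power_eq_imp_eq_base[of z "Suc r" x]) simp_all
  ultimately show ?thesis
    using True by auto
next
  case False
  with assms have "z ^ Suc r > 0"
    by (simp add: add_pos_pos del: power_Suc)
  then have "z \<noteq> 0"
    by (auto simp del: power_Suc)
  with False assms(1-3) have pos: "x > 0" "y > 0" "z > 0"
    by auto
  then have "neg_ln_poisson_lt r z \<le> neg_ln_poisson_lt r x + neg_ln_poisson_lt r y"
    using assms(4) by (rule neg_ln_poisson_lt_subadditive)
  with pos show ?thesis
    by (simp add: poisson_lt_Suc_eq_exp exp_add[symmetric])
qed

lemma poisson_lt_prod_le:
  assumes "finite A" and "\<And>i. i \<in> A \<Longrightarrow> y i \<ge> 0"
  shows "(\<Prod>i\<in>A. poisson_lt (Suc r) (y i)) \<le> poisson_lt (Suc r) (root (Suc r) (\<Sum>i\<in>A. y i ^ Suc r))"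
  using assms
proof (induction A rule: finite_induct)
  case (insert x F)
  let ?z = "root (Suc r) (\<Sum>i\<in>F. y i ^ Suc r)"
  have F_nonneg: "(\<Sum>i\<in>F. y i ^ Suc r) \<ge> 0"
    using insert.prems by (intro sum_nonneg) simp
  have z_pow: "?z ^ Suc r = (\<Sum>i\<in>F. y i ^ Suc r)"
    using F_nonneg by (simp del: power_Suc)
  have radicand_nonneg: "y x ^ Suc r + ?z ^ Suc r \<ge> 0"
    using insert.prems F_nonneg z_pow by (simp del: power_Suc)
  have "(\<Prod>i\<in>insert x F. poisson_lt (Suc r) (y i)) \<le> poisson_lt (Suc r) (y x) * poisson_lt (Suc r) ?z"
    using insert by (simp add: mult_left_mono poisson_lt_nonneg)
  also have "\<dots> \<le> poisson_lt (Suc r) (root (Suc r) (y x ^ Suc r + ?z ^ Suc r))"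
    using insert.prems F_nonneg radicand_nonneg
    by (intro poisson_lt_mult_le) (simp_all add: real_root_ge_zero del: power_Suc)
  finally show ?case
    using insert z_pow by (simp del: power_Suc)
qed simp

lemma nn_integral_poisson_lt:
  assumes "s > 0"
  shows "(\<integral>\<^sup>+t. ennreal (poisson_lt k (s * t)) * indicator {0..} t \<partial>lborel) = ennreal (real k / s)"
proof -
  \<comment> \<open>\<open>poisson_lt k (s t)\<close> is \<open>1/s\<close> times a sum of Erlang densities of rate \<open>s\<close>.\<close>
  have erlang_sum: "ennreal (poisson_lt k (s * t)) * indicator {0..} t =
      (\<Sum>j<k. ennreal (1 / s) * ennreal (erlang_density j s t))" for t
  proof (cases "t \<ge> 0")
    case True
    then have "poisson_lt k (s * t) = (\<Sum>j<k. (1 / s) * erlang_density j s t)"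
      using assms unfolding poisson_lt_def exp_trunc_def erlang_density_def
      by (simp add: sum_distrib_left power_mult_distrib field_simps)
    with True assms show ?thesis
      by (simp add: ennreal_mult[symmetric] sum_nonneg)
  qed (simp add: erlang_density_def)
  have erlang_total: "(\<integral>\<^sup>+t. ennreal (erlang_density j s t) \<partial>lborel) = 1" for j
    using nn_integral_erlang_ith_moment[OF assms, of j 0] by simp
  have "(\<integral>\<^sup>+t. ennreal (poisson_lt k (s * t)) * indicator {0..} t \<partial>lborel) =
      (\<Sum>j<k. ennreal (1 / s) * (\<integral>\<^sup>+t. ennreal (erlang_density j s t) \<partial>lborel))"
    unfolding erlang_sum by (subst nn_integral_sum) (auto simp: nn_integral_cmult)
  also have "\<dots> = ennreal (real k / s)"
    using assms by (simp add: erlang_total ennreal_of_nat_eq_real_of_nat ennreal_mult[symmetric])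
  finally show ?thesis .
qed

lemma nn_integral_prod_poisson_lt_le:
  assumes "finite A" and "\<And>i. p i \<ge> 0" and "k > 0"
    and s: "s = root k (\<Sum>i\<in>A. p i ^ k)" "s > 0"
  shows "(\<integral>\<^sup>+t. ennreal (\<Prod>i\<in>A. poisson_lt k (p i * t)) * indicator {0..} t \<partial>lborel)
           \<le> ennreal (real k / s)"
proof -
  obtain r where k: "k = Suc r"
    using assms(3) gr0_implies_Suc by blast
  have "(\<Prod>i\<in>A. poisson_lt k (p i * t)) \<le> poisson_lt k (s * t)" if "t \<ge> 0" for t
  proof -
    have "(\<Sum>i\<in>A. (p i * t) ^ k) = (\<Sum>i\<in>A. p i ^ k) * t ^ k"
      by (simp add: power_mult_distrib sum_distrib_right)
    then have "root k (\<Sum>i\<in>A. (p i * t) ^ k) = s * t"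
      using that assms(3) s(1) by (simp add: real_root_mult real_root_power_cancel)
    then show ?thesis
      using poisson_lt_prod_le[OF assms(1), of "\<lambda>i. p i * t" r] that assms(2) k by simp
  qed
  then have "(\<integral>\<^sup>+t. ennreal (\<Prod>i\<in>A. poisson_lt k (p i * t)) * indicator {0..} t \<partial>lborel)
      \<le> (\<integral>\<^sup>+t. ennreal (poisson_lt k (s * t)) * indicator {0..} t \<partial>lborel)"
    by (intro nn_integral_mono) (simp add: indicator_def ennreal_leI)
  also have "\<dots> = ennreal (real k / s)"
    using s(2) by (rule nn_integral_poisson_lt)
  finally show ?thesis .
qed

section \<open>The lower bound\<close>

lemma power_div_exp_le_fact: "(real k / exp 1) ^ k \<le> fact k"
proof -
  have "real k ^ k / fact k \<le> exp_trunc (Suc k) (real k)"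
    by (simp add: exp_trunc_Suc exp_trunc_nonneg)
  also have "\<dots> \<le> exp (real k)"
    using poisson_lt_le_1[of "real k" "Suc k"] by (simp add: poisson_lt_def exp_minus field_simps)
  also have "\<dots> = exp 1 ^ k"
    by (simp add: exp_of_nat_mult[symmetric])
  finally show ?thesis
    by (simp add: power_divide divide_le_eq mult.commute)
qed

lemma one_minus_sum_le_prod_one_minus:
  assumes "finite A" and "\<And>i. i \<in> A \<Longrightarrow> 0 \<le> a i \<and> a i \<le> (1::real)"
  shows "1 - (\<Sum>i\<in>A. a i) \<le> (\<Prod>i\<in>A. 1 - a i)"
  using assms
proof (induction A rule: finite_induct)
  case (insert x F)
  have ax: "0 \<le> a x" "a x \<le> 1"
    using insert.prems by auto
  have "0 \<le> (\<Sum>i\<in>F. a i)"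
    using insert.prems by (intro sum_nonneg) auto
  with insert ax have "1 - (\<Sum>i\<in>insert x F. a i) \<le> (1 - a x) * (1 - (\<Sum>i\<in>F. a i))"
    by (simp add: algebra_simps)
  also have "\<dots> \<le> (1 - a x) * (\<Prod>i\<in>F. 1 - a i)"
    using insert ax by (intro mult_left_mono) auto
  finally show ?case
    using insert by simp
qed simp

lemma prod_poisson_lt_ge:
  assumes "finite A" and "\<And>i. p i \<ge> 0" and "t \<ge> 0"
  shows "1 - (\<Sum>i\<in>A. p i ^ k) * t ^ k / fact k \<le> (\<Prod>i\<in>A. poisson_lt k (p i * t))"
proof -
  have pt: "p i * t \<ge> 0" for i
    using assms(2,3) by simp
  have "1 - (\<Sum>i\<in>A. p i ^ k) * t ^ k / fact k = 1 - (\<Sum>i\<in>A. (p i * t) ^ k / fact k)"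
    by (simp add: power_mult_distrib sum_distrib_right sum_divide_distrib)
  also have "\<dots> \<le> 1 - (\<Sum>i\<in>A. 1 - poisson_lt k (p i * t))"
    using one_minus_power_le_poisson_lt[OF pt] by (intro diff_left_mono sum_mono) (simp add: algebra_simps)
  also have "\<dots> \<le> (\<Prod>i\<in>A. 1 - (1 - poisson_lt k (p i * t)))"
    using poisson_lt_le_1[OF pt] poisson_lt_nonneg[OF pt]
    by (intro one_minus_sum_le_prod_one_minus assms(1)) simp
  finally show ?thesis
    by simp
qed

lemma nn_integral_one_minus_power:
  assumes "b > 0"
  shows "(\<integral>\<^sup>+t. ennreal (1 - (t / b) ^ k) * indicator {0..b} t \<partial>lborel) = ennreal (b * k / (k + 1))"
proof -
  define F where "F t = t - t ^ Suc k / (real (Suc k) * b ^ k)" for t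
  have "(F has_real_derivative 1 - (t / b) ^ k) (at t)" for t
  proof -
    have "((\<lambda>t. t ^ Suc k) has_real_derivative real (Suc k) * t ^ k) (at t)"
      using DERIV_pow[of "Suc k" t] by simp
    then have "(F has_real_derivative 1 - real (Suc k) * t ^ k / (real (Suc k) * b ^ k)) (at t)"
      unfolding F_def[abs_def] by (intro DERIV_diff DERIV_ident DERIV_cdivide)
    then show ?thesis
      by (simp add: power_divide del: of_nat_Suc)
  qed
  moreover have "0 \<le> 1 - (t / b) ^ k" if "t \<in> {0..b}" for t
    using that assms by (simp add: power_le_one)
  ultimately have "(\<integral>\<^sup>+t. ennreal (1 - (t / b) ^ k) * indicator {0..b} t \<partial>lborel) = F b - F 0"
    using assms by (intro nn_integral_FTC_Icc) auto
  also have "F b = b - b / real (Suc k)"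
    using assms by (simp add: F_def field_simps del: of_nat_Suc)
  then have "F b - F 0 = b * k / (k + 1)"
    by (simp add: F_def field_simps)
  finally show ?thesis .
qed

lemma nn_integral_prod_poisson_lt_ge:
  assumes "finite A" and "\<And>i. p i \<ge> 0" and "k > 0"
    and s: "s = root k (\<Sum>i\<in>A. p i ^ k)" "s > 0"
  shows "ennreal ((1 / exp 1) * (real k / (real k + 1)) * (real k / s))
           \<le> (\<integral>\<^sup>+t. ennreal (\<Prod>i\<in>A. poisson_lt k (p i * t)) * indicator {0..} t \<partial>lborel)"
proof -
  define b where "b = root k (fact k) / s"
  have b_pos: "b > 0"
    using assms(3) s(2) by (simp add: b_def real_root_gt_zero)
  have "real k / exp 1 = root k ((real k / exp 1) ^ k)"
    using assms(3) by (simp add: real_root_power_cancel)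
  also have "\<dots> \<le> root k (fact k)"
    using assms(3) power_div_exp_le_fact by simp
  finally have "(real k / exp 1) / s \<le> b"
    unfolding b_def by (rule divide_right_mono) (use s(2) in simp)
  then have "(real k / (real k + 1)) * ((real k / exp 1) / s) \<le> (real k / (real k + 1)) * b"
    by (rule mult_left_mono) simp
  then have "(1 / exp 1) * (real k / (real k + 1)) * (real k / s) \<le> b * k / (k + 1)"
    by (simp add: ac_simps)
  then have "ennreal ((1 / exp 1) * (real k / (real k + 1)) * (real k / s)) \<le> ennreal (b * k / (k + 1))"
    by (rule ennreal_leI)
  also have "\<dots> = (\<integral>\<^sup>+t. ennreal (1 - (t / b) ^ k) * indicator {0..b} t \<partial>lborel)"
    using b_pos by (rule nn_integral_one_minus_power[symmetric])
  also have "\<dots> \<le> (\<integral>\<^sup>+t. ennreal (\<Prod>i\<in>A. poisson_lt k (p i * t)) * indicator {0..} t \<partial>lborel)"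
  proof (intro nn_integral_mono)
    fix t :: real
    have "(t / b) ^ k = (\<Sum>i\<in>A. p i ^ k) * t ^ k / fact k"
      using assms s(2) by (simp add: b_def power_divide real_root_pow_pos2 sum_nonneg field_simps)
    then show "ennreal (1 - (t / b) ^ k) * indicator {0..b} t
        \<le> ennreal (\<Prod>i\<in>A. poisson_lt k (p i * t)) * indicator {0..} t"
      using prod_poisson_lt_ge[of A p t k] assms(1,2)
      by (auto simp: indicator_def intro: ennreal_leI)
  qed
  finally show ?thesis .
qed

lemma sum_power_pos:
  assumes "finite A" and "\<And>i. p i \<ge> 0" and "(\<Sum>i\<in>A. p i) = (1::real)"
  shows "(\<Sum>i\<in>A. p i ^ k) > 0"
proof -
  have "\<not> (\<forall>i\<in>A. p i = 0)"
  proof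
    assume "\<forall>i\<in>A. p i = 0"
    then have "(\<Sum>i\<in>A. p i) = 0"
      by simp
    with assms(3) show False
      by simp
  qed
  then obtain j where j: "j \<in> A" "p j \<noteq> 0"
    by blast
  then have "p j ^ k > 0"
    using assms(2)[of j] by simp
  with assms(1,2) j(1) show ?thesis
    by (intro sum_pos2) simp_all
qed

theorem corollary6:
  fixes m k :: nat and P :: "nat pmf"
  assumes "m \<ge> 1" and "k \<ge> 1" and "set_pmf P \<subseteq> {1..m}"
  defines "normk \<equiv> (\<Sum>i=1..m. pmf P i ^ k) powr (1 / real k)"
  shows "(1 / exp 1) * (real k / (real k + 1)) * (real k / normk)
           \<le> (\<integral>\<omega>. real (balls_until k \<omega>) \<partial>stream_space (measure_pmf P))
       \<and> (\<integral>\<omega>. real (balls_until k \<omega>) \<partial>stream_space (measure_pmf P)) \<le> real k / normk"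
proof -
  let ?E = "\<integral>\<omega>. real (balls_until k \<omega>) \<partial>stream_space (measure_pmf P)"
  let ?I = "\<integral>\<^sup>+t. ennreal (\<Prod>i\<in>{1..m}. poisson_lt k (pmf P i * t)) * indicator {0..} t \<partial>lborel"
  have sum_1: "(\<Sum>i\<in>{1..m}. pmf P i) = 1"
    using assms(3) by (simp add: sum_pmf_eq_1)
  then have "(\<Sum>i\<in>{1..m}. pmf P i ^ k) > 0"
    by (intro sum_power_pos) simp_all
  then have normk: "normk = root k (\<Sum>i\<in>{1..m}. pmf P i ^ k)" "normk > 0"
    using assms(2) by (simp_all add: normk_def root_powr_inverse real_root_gt_zero)
  let ?L = "(1 / exp 1) * (real k / (real k + 1)) * (real k / normk)"
  have "ennreal ?E = ?I"
    using integral_balls_until[OF _ assms(3,2)] exp_moment_survival_poly_eq_nn_integral[OF _ _ sum_1]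
    by simp
  moreover have "ennreal ?L \<le> ?I"
    using assms(2) normk by (intro nn_integral_prod_poisson_lt_ge) auto
  moreover have "?I \<le> ennreal (real k / normk)"
    using assms(2) normk by (intro nn_integral_prod_poisson_lt_le) auto
  ultimately have "ennreal ?L \<le> ennreal ?E" "ennreal ?E \<le> ennreal (real k / normk)"
    by simp_all
  moreover have "?L > 0"
    using assms(2) normk(2) by simp
  ultimately show ?thesis
    unfolding ennreal_le_iff2 by auto
qed

end
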